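(* Let $\mathcal{X}=(X,\{R_i\}_{i=0}^d)$ be an association scheme with adjacency matrices $A_0,\dots,A_d$, valencies $k_0,\dots,k_d$ and intersection numbers $p_{ij}^k$, and let $W=\sum_{i=0}^dw_iA_i$ and $W'=\sum_{i=0}^dw'_iA_i$ be type-II matrices in its Bose--Mesner algebra. Suppose that $w_0,\dots,w_d$ are pairwise distinct and $w'_0,\dots,w'_d$ are pairwise distinct, that the valencies $k_0,\dots,k_d$ are pairwise distinct, and that $\min\{p_{11}^i\mid 0<i\leq d\}>\frac{|X|}{2}$. If $W$ and $W'$ are equivalent, then $W$ is a scalar multiple of $W'$.
   Context: An association scheme $(X,\{R_i\}_{i=0}^d)$ is a partition of $X\times X$ into relations $R_0=\{(x,x)\}$, $R_1,\dots,R_d$ such that for $(x,y)\in R_k$ the number $p_{ij}^k=|\{z:(x,z)\in R_i,(z,y)\in R_j\}|$ depends only on $i,j,k$ (and each transpose $R_i^\top$ is some $R_j$); $A_i$ is the $(0,1)$-matrix of $R_i$, the Bose--Mesner algebra is the span of the $A_i$, and the valency $k_i$ is the number of $y$ with $(x,y)\in R_i$ for any fixed $x$. A type-II matrix is an $n\times n$ matrix $W$ ($n=|X|$) with nonzero complex entries such that $W(W^{(-)})^\top=nI$, $W^{(-)}$ the entrywise inverse. $W,W'$ are equivalent if there exist invertible diagonal matrices $D,D'$ and permutation matrices $T,T'$ with $DWD'=TW'T'$. *)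

theory Defs
  imports Complex_Main
begin

text \<open>An association scheme on the finite nonempty set X with classes R 0, ..., R d.
  Matrices indexed by X are represented as functions of type 'a => 'a => complex.\<close>

definition assoc_scheme :: "'a set \<Rightarrow> nat \<Rightarrow> (nat \<Rightarrow> ('a \<times> 'a) set) \<Rightarrow> bool" where
  "assoc_scheme X d R \<longleftrightarrow>
     finite X \<and> X \<noteq> {} \<and>
     R 0 = {(x, x) | x. x \<in> X} \<and>
     (\<forall>i\<le>d. R i \<noteq> {} \<and> R i \<subseteq> X \<times> X) \<and>
     (\<forall>i\<le>d. \<forall>j\<le>d. i \<noteq> j \<longrightarrow> R i \<inter> R j = {}) \<and>
     (\<Union>i\<le>d. R i) = X \<times> X \<and>
     (\<forall>i\<le>d. \<exists>j\<le>d. (R i)\<inverse> = R j) \<and>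
     (\<forall>i\<le>d. \<forall>j\<le>d. \<forall>k\<le>d. \<exists>p::nat. \<forall>(x, y) \<in> R k.
        card {z \<in> X. (x, z) \<in> R i \<and> (z, y) \<in> R j} = p)"

definition inter_num :: "'a set \<Rightarrow> (nat \<Rightarrow> ('a \<times> 'a) set) \<Rightarrow> nat \<Rightarrow> nat \<Rightarrow> nat \<Rightarrow> nat" where
  "inter_num X R i j k =
     (let (x, y) = (SOME xy. xy \<in> R k) in card {z \<in> X. (x, z) \<in> R i \<and> (z, y) \<in> R j})"

definition valency :: "'a set \<Rightarrow> (nat \<Rightarrow> ('a \<times> 'a) set) \<Rightarrow> nat \<Rightarrow> nat" where
  "valency X R i = (let x = (SOME x. x \<in> X) in card {y \<in> X. (x, y) \<in> R i})"

definition adj_mat :: "(nat \<Rightarrow> ('a \<times> 'a) set) \<Rightarrow> nat \<Rightarrow> 'a \<Rightarrow> 'a \<Rightarrow> complex" where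
  "adj_mat R i x y = (if (x, y) \<in> R i then 1 else 0)"

definition bm_elem :: "nat \<Rightarrow> (nat \<Rightarrow> ('a \<times> 'a) set) \<Rightarrow> (nat \<Rightarrow> complex) \<Rightarrow> 'a \<Rightarrow> 'a \<Rightarrow> complex" where
  "bm_elem d R w x y = (\<Sum>i\<le>d. w i * adj_mat R i x y)"

text \<open>Type-II matrix: nonzero entries and W (W^(-))^T = |X| I.\<close>
definition type_II :: "'a set \<Rightarrow> ('a \<Rightarrow> 'a \<Rightarrow> complex) \<Rightarrow> bool" where
  "type_II X W \<longleftrightarrow>
     (\<forall>x\<in>X. \<forall>y\<in>X. W x y \<noteq> 0) \<and>
     (\<forall>x\<in>X. \<forall>y\<in>X. (\<Sum>z\<in>X. W x z * inverse (W y z)) = (if x = y then of_nat (card X) else 0))"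

text \<open>Equivalence: D W D' = T W' T' with D, D' invertible diagonal and T, T' permutation
  matrices; entrywise, with T e_{sigma x} rows and T' columns given by bijections of X.\<close>
definition type_II_equiv :: "'a set \<Rightarrow> ('a \<Rightarrow> 'a \<Rightarrow> complex) \<Rightarrow> ('a \<Rightarrow> 'a \<Rightarrow> complex) \<Rightarrow> bool" where
  "type_II_equiv X W W' \<longleftrightarrow>
     (\<exists>D D' :: 'a \<Rightarrow> complex. \<exists>\<sigma> \<tau> :: 'a \<Rightarrow> 'a.
        (\<forall>x\<in>X. D x \<noteq> 0 \<and> D' x \<noteq> 0) \<and> bij_betw \<sigma> X X \<and> bij_betw \<tau> X X \<and>
        (\<forall>x\<in>X. \<forall>y\<in>X. D x * W x y * D' y = W' (\<sigma> x) (\<tau> y)))"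

end

theory Submission
  imports Defs
begin

text \<open>A class and its converse have the same valency, so distinct valencies make every class
  symmetric and the hypothesis on p_11^i says that any two distinct points have more than |X|/2
  common R_1-neighbours. Write D W D' = T W' T'. For distinct rows x, x' of W, the common
  neighbours of x and x' and (pulled back along the column permutation) those of the
  corresponding rows of W' are two majorities, hence meet in a column where W takes the value
  w_1 in both rows and W' the value w'_1; comparing entries gives D x = D x'. Likewise D' is
  constant, so W' is a rearrangement of c W. The value w_i occurs exactly k_i times in each row
  of W, w'_j exactly k_j times in each row of W', and rearranging preserves these counts, so
  distinct valencies give w'_i = c w_i. Of the type-II hypotheses only the nonvanishing of the
  entries of W is needed.\<close>

lemma assoc_scheme_finite: "assoc_scheme X d R \<Longrightarrow> finite X"
  by (simp add: assoc_scheme_def)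

lemma assoc_scheme_nonempty: "assoc_scheme X d R \<Longrightarrow> X \<noteq> {}"
  by (simp add: assoc_scheme_def)

lemma assoc_scheme_diagonal: "assoc_scheme X d R \<Longrightarrow> R 0 = {(x, x) | x. x \<in> X}"
  by (simp add: assoc_scheme_def)

lemma assoc_scheme_classes:
  "assoc_scheme X d R \<Longrightarrow> \<forall>i\<le>d. R i \<noteq> {} \<and> R i \<subseteq> X \<times> X"
  unfolding assoc_scheme_def by (elim conjE)

lemma assoc_scheme_class_subset:
  "assoc_scheme X d R \<Longrightarrow> i \<le> d \<Longrightarrow> (x, y) \<in> R i \<Longrightarrow> x \<in> X \<and> y \<in> X"
  using assoc_scheme_classes by blast

lemma assoc_scheme_class_nonempty: "assoc_scheme X d R \<Longrightarrow> i \<le> d \<Longrightarrow> R i \<noteq> {}"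
  using assoc_scheme_classes by blast

lemma assoc_scheme_class_unique:
  "assoc_scheme X d R \<Longrightarrow> i \<le> d \<Longrightarrow> j \<le> d \<Longrightarrow> (x, y) \<in> R i \<Longrightarrow> (x, y) \<in> R j \<Longrightarrow> i = j"
  unfolding assoc_scheme_def by (elim conjE) blast

lemma assoc_scheme_class_exists:
  assumes "assoc_scheme X d R" "x \<in> X" "y \<in> X"
  obtains i where "i \<le> d" "(x, y) \<in> R i"
proof -
  have "(\<Union>i\<le>d. R i) = X \<times> X"
    using assms(1) unfolding assoc_scheme_def by (elim conjE)
  then show ?thesis using assms(2,3) that by blast
qed

lemma assoc_scheme_converse:
  assumes "assoc_scheme X d R" "i \<le> d"
  shows "\<exists>j\<le>d. (R i)\<inverse> = R j"
proof -
  have "\<forall>i\<le>d. \<exists>j\<le>d. (R i)\<inverse> = R j"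
    using assms(1) unfolding assoc_scheme_def by (elim conjE)
  then show ?thesis using assms(2) by blast
qed

lemma assoc_scheme_regular:
  assumes "assoc_scheme X d R" "i \<le> d" "j \<le> d" "k \<le> d"
  shows "\<exists>p. \<forall>(x, y) \<in> R k. card {z \<in> X. (x, z) \<in> R i \<and> (z, y) \<in> R j} = p"
proof -
  have "\<forall>i\<le>d. \<forall>j\<le>d. \<forall>k\<le>d. \<exists>p::nat. \<forall>(x, y) \<in> R k.
      card {z \<in> X. (x, z) \<in> R i \<and> (z, y) \<in> R j} = p"
    using assms(1) unfolding assoc_scheme_def by (elim conjE)
  then show ?thesis using assms(2-4) by blast
qed

lemma bm_elem_on_class:
  assumes "assoc_scheme X d R" "i \<le> d" "(x, y) \<in> R i"
  shows "bm_elem d R w x y = w i"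
proof -
  have "adj_mat R l x y = (if l = i then 1 else 0)" if l: "l \<le> d" for l
  proof (cases "l = i")
    case False
    then have "(x, y) \<notin> R l"
      using assoc_scheme_class_unique[OF assms(1) l assms(2) _ assms(3)] by blast
    then show ?thesis using False by (simp add: adj_mat_def)
  qed (simp add: adj_mat_def assms(3))
  then have "bm_elem d R w x y = (\<Sum>l\<le>d. if l = i then w i else 0)"
    unfolding bm_elem_def by (intro sum.cong) simp_all
  then show ?thesis using assms(2) by simp
qed

lemma valency_eq_card_class_row:
  assumes "assoc_scheme X d R" "i \<le> d" "x \<in> X"
  shows "card {y \<in> X. (x, y) \<in> R i} = valency X R i"
proof -
  obtain j where j: "j \<le> d" "(R i)\<inverse> = R j"
    using assoc_scheme_converse[OF assms(1,2)] by blast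
  obtain p where p: "\<forall>(a, b) \<in> R 0. card {z \<in> X. (a, z) \<in> R i \<and> (z, b) \<in> R j} = p"
    using assoc_scheme_regular[OF assms(1,2) j(1), of 0] by blast
  have row: "card {y \<in> X. (a, y) \<in> R i} = p" if a: "a \<in> X" for a
  proof -
    have "(a, a) \<in> R 0" using assoc_scheme_diagonal[OF assms(1)] a by blast
    then have "card {z \<in> X. (a, z) \<in> R i \<and> (z, a) \<in> R j} = p" using p by auto
    moreover have "{z \<in> X. (a, z) \<in> R i \<and> (z, a) \<in> R j} = {y \<in> X. (a, y) \<in> R i}"
      using j(2) by blast
    ultimately show ?thesis by simp
  qed
  have "(SOME x. x \<in> X) \<in> X" using assoc_scheme_nonempty[OF assms(1)] by (simp add: some_in_eq)
  then show ?thesis unfolding valency_def Let_def using row assms(3) by simp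
qed

lemma card_class:
  assumes "assoc_scheme X d R" "i \<le> d"
  shows "card (R i) = card X * valency X R i"
proof -
  have "R i = Sigma X (\<lambda>x. {y \<in> X. (x, y) \<in> R i})"
    using assoc_scheme_class_subset[OF assms] by auto
  then have "card (R i) = card (Sigma X (\<lambda>x. {y \<in> X. (x, y) \<in> R i}))"
    by (rule arg_cong)
  also have "\<dots> = (\<Sum>x\<in>X. card {y \<in> X. (x, y) \<in> R i})"
    using assoc_scheme_finite[OF assms(1)] by (simp add: card_SigmaI)
  also have "\<dots> = card X * valency X R i"
    using valency_eq_card_class_row[OF assms] by simp
  finally show ?thesis .
qed

lemma class_row_nonempty:
  assumes "assoc_scheme X d R" "i \<le> d" "x \<in> X"
  obtains y where "y \<in> X" "(x, y) \<in> R i"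
proof -
  obtain a b where ab: "(a, b) \<in> R i" using assoc_scheme_class_nonempty[OF assms(1,2)] by auto
  then have "a \<in> X" "b \<in> X" using assoc_scheme_class_subset[OF assms(1,2)] by auto
  then have "card {y \<in> X. (a, y) \<in> R i} > 0"
    using ab assoc_scheme_finite[OF assms(1)] by (auto simp: card_gt_0_iff)
  then have "card {y \<in> X. (x, y) \<in> R i} > 0"
    using valency_eq_card_class_row[OF assms(1,2)] \<open>a \<in> X\<close> assms(3) by simp
  then have "{y \<in> X. (x, y) \<in> R i} \<noteq> {}" by (auto simp: card_gt_0_iff)
  then show ?thesis using that by blast
qed

lemma class_symmetric_if_valencies_distinct:
  assumes "assoc_scheme X d R" "i \<le> d" "inj_on (valency X R) {0..d}"
  shows "(R i)\<inverse> = R i"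
proof -
  obtain j where j: "j \<le> d" "(R i)\<inverse> = R j" using assoc_scheme_converse[OF assms(1,2)] by blast
  have "card X * valency X R j = card X * valency X R i"
    using card_class[OF assms(1)] j assms(2) by (metis card_inverse)
  moreover have "card X > 0"
    using assoc_scheme_finite[OF assms(1)] assoc_scheme_nonempty[OF assms(1)] by (simp add: card_gt_0_iff)
  ultimately have "valency X R j = valency X R i" by simp
  then have "j = i" using assms(2,3) j(1) by (auto dest: inj_onD)
  then show ?thesis using j by simp
qed

lemma inter_num_eq_card:
  assumes "assoc_scheme X d R" "i \<le> d" "j \<le> d" "k \<le> d" "(a, b) \<in> R k"
  shows "card {z \<in> X. (a, z) \<in> R i \<and> (z, b) \<in> R j} = inter_num X R i j k"
proof -
  obtain p where p: "\<forall>(x, y) \<in> R k. card {z \<in> X. (x, z) \<in> R i \<and> (z, y) \<in> R j} = p"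
    using assoc_scheme_regular[OF assms(1-4)] by blast
  obtain x y where xy: "(SOME xy. xy \<in> R k) = (x, y)" by fastforce
  have "(SOME xy. xy \<in> R k) \<in> R k"
    using assoc_scheme_class_nonempty[OF assms(1,4)] by (simp add: some_in_eq)
  then have "card {z \<in> X. (x, z) \<in> R i \<and> (z, y) \<in> R j} = p" using p xy by auto
  moreover have "card {z \<in> X. (a, z) \<in> R i \<and> (z, b) \<in> R j} = p" using p assms(5) by blast
  ultimately show ?thesis unfolding inter_num_def xy by simp
qed

lemma card_common_neighbours_gt:
  assumes "assoc_scheme X d R" "1 \<le> d" "inj_on (valency X R) {0..d}"
    and "\<forall>i\<in>{1..d}. real (inter_num X R 1 1 i) > real (card X) / 2"
    and "a \<in> X" "b \<in> X" "a \<noteq> b"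
  shows "real (card {z \<in> X. (a, z) \<in> R 1 \<and> (b, z) \<in> R 1}) > real (card X) / 2"
proof -
  obtain i where i: "i \<le> d" "(a, b) \<in> R i"
    using assoc_scheme_class_exists[OF assms(1,5,6)] by blast
  have "i \<noteq> 0"
  proof
    assume "i = 0"
    then show False using i(2) assoc_scheme_diagonal[OF assms(1)] assms(7) by blast
  qed
  then have "real (inter_num X R 1 1 i) > real (card X) / 2" using assms(4) i(1) by simp
  moreover have "{z \<in> X. (a, z) \<in> R 1 \<and> (b, z) \<in> R 1} = {z \<in> X. (a, z) \<in> R 1 \<and> (z, b) \<in> R 1}"
    using class_symmetric_if_valencies_distinct[OF assms(1,2,3)] by blast
  ultimately show ?thesis using inter_num_eq_card[OF assms(1,2,2) i] by simp
qed

lemma majorities_intersect: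
  assumes "finite X" "A \<subseteq> X" "B \<subseteq> X"
    and "real (card A) > real (card X) / 2" "real (card B) > real (card X) / 2"
  shows "A \<inter> B \<noteq> {}"
proof
  assume "A \<inter> B = {}"
  then have "card (A \<union> B) = card A + card B"
    using assms(1-3) by (meson card_Un_disjoint finite_subset)
  moreover have "card (A \<union> B) \<le> card X" using assms(1-3) by (simp add: card_mono)
  ultimately show False using assms(4,5) by linarith
qed

lemma row_scaling_constant:
  fixes W W' :: "'a \<Rightarrow> 'a \<Rightarrow> 'b::field"
  assumes fin: "finite X" and \<sigma>: "inj_on \<sigma> X" "\<sigma> ` X \<subseteq> X" and \<tau>: "bij_betw \<tau> X X"
    and common: "\<And>x x'. x \<in> X \<Longrightarrow> x' \<in> X \<Longrightarrow> x \<noteq> x' \<Longrightarrow>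
      real (card {z \<in> X. (x, z) \<in> E \<and> (x', z) \<in> E}) > real (card X) / 2"
    and W_E: "\<And>a b. (a, b) \<in> E \<Longrightarrow> W a b = \<alpha>" and W'_E: "\<And>a b. (a, b) \<in> E \<Longrightarrow> W' a b = \<alpha>'"
    and "\<alpha> \<noteq> 0" and D': "\<forall>z\<in>X. D' z \<noteq> 0"
    and equiv: "\<And>x y. x \<in> X \<Longrightarrow> y \<in> X \<Longrightarrow> D x * W x y * D' y = W' (\<sigma> x) (\<tau> y)"
    and x: "x \<in> X" "x' \<in> X"
  shows "D x = D x'"
proof (cases "x = x'")
  case False
  define S where "S = {z \<in> X. (x, z) \<in> E \<and> (x', z) \<in> E}"
  define T where "T = {v \<in> X. (\<sigma> x, v) \<in> E \<and> (\<sigma> x', v) \<in> E}"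
  have "\<sigma> x \<noteq> \<sigma> x'" using False \<sigma>(1) x by (metis inj_on_eq_iff)
  then have T_large: "real (card T) > real (card X) / 2"
    unfolding T_def using common \<sigma>(2) x by blast
  have "S \<subseteq> X" by (auto simp: S_def)
  then have "card (\<tau> ` S) = card S" "\<tau> ` S \<subseteq> X"
    using \<tau> by (auto simp: bij_betw_def card_image inj_on_subset)
  moreover have "real (card S) > real (card X) / 2"
    unfolding S_def using common[OF x False] .
  ultimately have "\<tau> ` S \<inter> T \<noteq> {}"
    using majorities_intersect[OF fin, of "\<tau> ` S" T] T_large by (simp add: T_def)
  then obtain z where z: "z \<in> S" "\<tau> z \<in> T" by blast
  then have "D x * \<alpha> * D' z = D x' * \<alpha> * D' z"
    using equiv[of x z] equiv[of x' z] x W_E W'_E by (simp add: S_def T_def)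
  then show ?thesis using \<open>\<alpha> \<noteq> 0\<close> D' z(1) by (simp add: S_def)
qed simp

lemma card_level_set_rearranged:
  fixes U V :: "'a \<Rightarrow> 'b::field"
  assumes "bij_betw \<tau> X X" "c \<noteq> 0" "\<And>y. y \<in> X \<Longrightarrow> V (\<tau> y) = c * U y"
  shows "card {y \<in> X. V y = c * a} = card {y \<in> X. U y = a}"
proof -
  have "{y \<in> X. V y = c * a} = \<tau> ` {y \<in> X. U y = a}"
  proof (intro equalityI subsetI)
    fix v assume v: "v \<in> {y \<in> X. V y = c * a}"
    then obtain y where y: "y \<in> X" "v = \<tau> y" using assms(1) by (auto simp: bij_betw_def)
    then show "v \<in> \<tau> ` {y \<in> X. U y = a}" using v assms(2,3) by auto
  next
    fix v assume "v \<in> \<tau> ` {y \<in> X. U y = a}"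
    then show "v \<in> {y \<in> X. V y = c * a}" using assms(1,3) by (auto simp: bij_betw_def)
  qed
  moreover have "inj_on \<tau> {y \<in> X. U y = a}"
    using assms(1) by (auto simp: bij_betw_def inj_on_subset)
  ultimately show ?thesis by (simp add: card_image)
qed

lemma bm_elem_row_level_set:
  assumes "assoc_scheme X d R" "inj_on w {0..d}" "i \<le> d" "x \<in> X"
  shows "{y \<in> X. bm_elem d R w x y = w i} = {y \<in> X. (x, y) \<in> R i}"
proof -
  have "bm_elem d R w x y = w i \<longleftrightarrow> (x, y) \<in> R i" if y: "y \<in> X" for y
  proof -
    obtain l where l: "l \<le> d" "(x, y) \<in> R l"
      using assoc_scheme_class_exists[OF assms(1,4) y] by blast
    then have "bm_elem d R w x y = w l" by (rule bm_elem_on_class[OF assms(1)])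
    moreover have "w l = w i \<longleftrightarrow> l = i" using assms(2,3) l(1) by (auto dest: inj_onD)
    ultimately show ?thesis using assoc_scheme_class_unique[OF assms(1) l(1) assms(3)] l(2) by auto
  qed
  then show ?thesis by blast
qed

lemma bm_coeffs_scaled_if_rearranged:
  assumes scheme: "assoc_scheme X d R"
    and "inj_on w {0..d}" "inj_on w' {0..d}" "inj_on (valency X R) {0..d}"
    and "\<sigma> ` X \<subseteq> X" "bij_betw \<tau> X X" "c \<noteq> 0"
    and rearranged: "\<forall>x\<in>X. \<forall>y\<in>X. bm_elem d R w' (\<sigma> x) (\<tau> y) = c * bm_elem d R w x y"
    and i: "i \<le> d"
  shows "w' i = c * w i"
proof -
  obtain x where x: "x \<in> X" using assoc_scheme_nonempty[OF scheme] by blast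
  then have \<sigma>x: "\<sigma> x \<in> X" using assms(5) by blast
  obtain y where y: "y \<in> X" "(x, y) \<in> R i" using class_row_nonempty[OF scheme i x] .
  then have "\<tau> y \<in> X" using assms(6) by (auto simp: bij_betw_def)
  then obtain j where j: "j \<le> d" "(\<sigma> x, \<tau> y) \<in> R j"
    using assoc_scheme_class_exists[OF scheme \<sigma>x] by blast
  have "bm_elem d R w' (\<sigma> x) (\<tau> y) = c * bm_elem d R w x y" using rearranged x y(1) by blast
  then have w'j: "w' j = c * w i"
    using bm_elem_on_class[OF scheme j, of w'] bm_elem_on_class[OF scheme i y(2), of w] by simp
  have "valency X R j = card {v \<in> X. bm_elem d R w' (\<sigma> x) v = c * w i}"
    using valency_eq_card_class_row[OF scheme j(1) \<sigma>x]
      bm_elem_row_level_set[OF scheme assms(3) j(1) \<sigma>x] w'j by simp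
  also have "\<dots> = card {v \<in> X. bm_elem d R w x v = w i}"
    by (rule card_level_set_rearranged[OF assms(6,7)]) (use rearranged x in blast)
  also have "\<dots> = valency X R i"
    using valency_eq_card_class_row[OF scheme i x] bm_elem_row_level_set[OF scheme assms(2) i x] by simp
  finally have "j = i" using assms(4) i j(1) by (auto dest: inj_onD)
  then show ?thesis using w'j by simp
qed

lemma equiv_bm_elem_is_scaled_rearrangement:
  assumes scheme: "assoc_scheme X d R" and "1 \<le> d"
    and valencies: "inj_on (valency X R) {0..d}"
    and p11: "\<forall>i\<in>{1..d}. real (inter_num X R 1 1 i) > real (card X) / 2"
    and nonzero: "\<forall>x\<in>X. \<forall>y\<in>X. bm_elem d R w x y \<noteq> 0"
    and "type_II_equiv X (bm_elem d R w) (bm_elem d R w')"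
  obtains c \<sigma> \<tau> where "c \<noteq> 0" "\<sigma> ` X \<subseteq> X" "bij_betw \<tau> X X"
    "\<forall>x\<in>X. \<forall>y\<in>X. bm_elem d R w' (\<sigma> x) (\<tau> y) = c * bm_elem d R w x y"
proof -
  obtain D D' :: "'a \<Rightarrow> complex" and \<sigma> \<tau> where D: "\<forall>x\<in>X. D x \<noteq> 0 \<and> D' x \<noteq> 0"
    and \<sigma>: "bij_betw \<sigma> X X" and \<tau>: "bij_betw \<tau> X X"
    and equiv: "\<forall>x\<in>X. \<forall>y\<in>X. D x * bm_elem d R w x y * D' y = bm_elem d R w' (\<sigma> x) (\<tau> y)"
    using assms(6) unfolding type_II_equiv_def by blast
  have fin: "finite X" using assoc_scheme_finite[OF scheme] .
  have common: "\<And>x x'. x \<in> X \<Longrightarrow> x' \<in> X \<Longrightarrow> x \<noteq> x' \<Longrightarrow>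
      real (card {z \<in> X. (x, z) \<in> R 1 \<and> (x', z) \<in> R 1}) > real (card X) / 2"
    using card_common_neighbours_gt[OF scheme assms(2) valencies p11] by blast
  have R1_sym: "(a, b) \<in> R 1 \<Longrightarrow> (b, a) \<in> R 1" for a b
    using class_symmetric_if_valencies_distinct[OF scheme assms(2) valencies] by blast
  have on_R1: "bm_elem d R v a b = v 1" if "(a, b) \<in> R 1" for v a b
    using bm_elem_on_class[OF scheme assms(2) that] .
  obtain a b where "(a, b) \<in> R 1" using assoc_scheme_class_nonempty[OF scheme assms(2)] by auto
  then have "w 1 \<noteq> 0"
    using nonzero on_R1 assoc_scheme_class_subset[OF scheme assms(2)] by metis
  obtain x0 where x0: "x0 \<in> X" using assoc_scheme_nonempty[OF scheme] by blast
  have \<sigma>X: "inj_on \<sigma> X" "\<sigma> ` X \<subseteq> X" and \<tau>X: "inj_on \<tau> X" "\<tau> ` X \<subseteq> X"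
    using \<sigma> \<tau> by (auto simp: bij_betw_def)
  have D_const: "D x = D x0" if "x \<in> X" for x
    using row_scaling_constant[where E = "R 1" and W = "bm_elem d R w" and \<alpha> = "w 1"
        and W' = "bm_elem d R w'" and \<alpha>' = "w' 1",
        OF fin \<sigma>X \<tau> common on_R1 on_R1 \<open>w 1 \<noteq> 0\<close> _ equiv[rule_format] that x0]
      D by blast
  have equiv_transposed: "D' y * bm_elem d R w x y * D x = bm_elem d R w' (\<sigma> x) (\<tau> y)"
    if "y \<in> X" "x \<in> X" for x y
    using equiv that by (simp add: mult_ac)
  have D'_const: "D' y = D' x0" if "y \<in> X" for y
    using row_scaling_constant[where E = "R 1" and W = "\<lambda>a b. bm_elem d R w b a" and \<alpha> = "w 1"
        and W' = "\<lambda>a b. bm_elem d R w' b a" and \<alpha>' = "w' 1" and D = D' and D' = D,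
        OF fin \<tau>X \<sigma> common on_R1[OF R1_sym] on_R1[OF R1_sym] \<open>w 1 \<noteq> 0\<close> _ equiv_transposed that x0]
      D by blast
  show ?thesis
  proof
    show "D x0 * D' x0 \<noteq> 0" using D x0 by simp
    show "\<forall>x\<in>X. \<forall>y\<in>X. bm_elem d R w' (\<sigma> x) (\<tau> y) = D x0 * D' x0 * bm_elem d R w x y"
      using equiv D_const D'_const by (simp add: mult_ac)
  qed (use \<sigma>X \<tau> in auto)
qed

theorem lemma5p7:
  fixes X :: "'a set" and d :: nat and R :: "nat \<Rightarrow> ('a \<times> 'a) set"
    and w w' :: "nat \<Rightarrow> complex"
  assumes "assoc_scheme X d R"
    and "1 \<le> d"
    and "type_II X (bm_elem d R w)"
    and "type_II X (bm_elem d R w')"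
    and "inj_on w {0..d}"
    and "inj_on w' {0..d}"
    and "inj_on (valency X R) {0..d}"
    and "\<forall>i\<in>{1..d}. real (inter_num X R 1 1 i) > real (card X) / 2"
    and "type_II_equiv X (bm_elem d R w) (bm_elem d R w')"
  shows "\<exists>c::complex. \<forall>x\<in>X. \<forall>y\<in>X. bm_elem d R w x y = c * bm_elem d R w' x y"
proof -
  have "\<forall>x\<in>X. \<forall>y\<in>X. bm_elem d R w x y \<noteq> 0" using assms(3) by (simp add: type_II_def)
  then obtain c \<sigma> \<tau> where c: "c \<noteq> 0" and \<sigma>: "\<sigma> ` X \<subseteq> X" and \<tau>: "bij_betw \<tau> X X"
    and rearranged: "\<forall>x\<in>X. \<forall>y\<in>X. bm_elem d R w' (\<sigma> x) (\<tau> y) = c * bm_elem d R w x y"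
    using equiv_bm_elem_is_scaled_rearrangement[OF assms(1,2,7,8) _ assms(9)] by blast
  have coeffs: "w' i = c * w i" if "i \<le> d" for i
    using bm_coeffs_scaled_if_rearranged[OF assms(1,5,6,7) \<sigma> \<tau> c rearranged that] .
  have "bm_elem d R w' x y = c * bm_elem d R w x y" for x y
  proof -
    have "bm_elem d R w' x y = (\<Sum>i\<le>d. c * (w i * adj_mat R i x y))"
      unfolding bm_elem_def using coeffs by (intro sum.cong) simp_all
    then show ?thesis by (simp add: bm_elem_def sum_distrib_left)
  qed
  then show ?thesis using c by (intro exI[of _ "inverse c"]) simp
qed

end
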